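(* Let $m\ge1$ and $A=(a_0,\ldots,a_m)$ real with $a_0,a_m\ne0$. For every $x\in[-1,1]$ and every $\varepsilon>0$ there exists $n_0$ such that for every $n>n_0$ the polynomial $T_{n,A}$ has a root $\xi$ with $|x-\xi|<\varepsilon$.
   Context: $T_k$ denotes the Chebyshev polynomial of the first kind, $T_k(\cos\theta)=\cos k\theta$. For $A=(a_0,\ldots,a_m)$ real with $a_0,a_m\ne0$ and $n\ge m$, $T_{n,A}(x)=\sum_{i=0}^m a_iT_{n-i}(x)$. *)

theory Defs
  imports "HOL-Computational_Algebra.Polynomial"
begin

fun cheb_T :: "nat \<Rightarrow> real poly" where
  "cheb_T 0 = 1"
| "cheb_T (Suc 0) = [:0, 1:]"
| "cheb_T (Suc (Suc k)) = [:0, 2:] * cheb_T (Suc k) - cheb_T k"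

definition cheb_TA :: "nat \<Rightarrow> real list \<Rightarrow> real poly" where
  "cheb_TA n A = (\<Sum>i<length A. smult (A ! i) (cheb_T (n - i)))"

end

theory Submission
  imports Defs "HOL-Analysis.Line_Segment"
begin

text \<open>With \<open>x = cos t\<close> and \<open>cos ((n - i) t) = cos (n t) cos (i t) + sin (n t) sin (i t)\<close>
  one gets \<open>T_{n,A}(cos t) = cos (n t) C(t) + sin (n t) S(t)\<close>, where \<open>C(t) = \<Sum> a_i cos (i t)\<close>
  and \<open>S(t) = \<Sum> a_i sin (i t)\<close> do not depend on \<open>n\<close>. Since \<open>C + i S\<close> is the polynomial
  \<open>\<Sum> a_i z^i\<close> evaluated at \<open>z = e^{it}\<close> and \<open>a_0 \<noteq> 0\<close>, the pair \<open>(C, S)\<close> has only finitely many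
  common zeros modulo \<open>2\<pi>\<close>, so some \<open>t\<^sub>0\<close> close to \<open>arccos x\<close> has
  \<open>(C, S)(t\<^sub>0) = R (cos \<psi>, sin \<psi>)\<close> with \<open>R > 0\<close>. For large \<open>n\<close> the phase \<open>n t\<close> passes through
  \<open>\<psi>\<close> and \<open>\<psi> + \<pi>\<close> (mod \<open>2\<pi>\<close>) within \<open>2\<pi>/n\<close> of \<open>t\<^sub>0\<close>, where by continuity the function is
  near \<open>R\<close> and \<open>-R\<close>; the intermediate value theorem yields a zero \<open>t\<close>, and \<open>\<xi> = cos t\<close>.\<close>

lemma abs_cos_diff_le: "\<bar>cos (w::real) - cos z\<bar> \<le> \<bar>w - z\<bar>"
proof -
  have "\<bar>cos w - cos z\<bar> = 2 * \<bar>sin ((w + z) / 2)\<bar> * \<bar>sin ((z - w) / 2)\<bar>"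
    by (simp add: cos_diff_cos abs_mult)
  also have "\<dots> \<le> 2 * 1 * \<bar>(z - w) / 2\<bar>"
    by (intro mult_mono abs_sin_x_le_abs_x) auto
  finally show ?thesis by simp
qed

lemma inj_on_cis_interval:
  assumes "u \<le> l + 2 * pi"
  shows "inj_on cis {l<..<u}"
proof (rule inj_onI)
  fix x y assume x: "x \<in> {l<..<u}" and y: "y \<in> {l<..<u}" and "cis x = cis y"
  then obtain k :: int where k: "x = y + 2 * pi * k"
    using sin_cos_eq_iff by (metis cis.sel)
  have "\<bar>x - y\<bar> < 2 * pi"
    using x y assms by auto
  then have "2 * pi * \<bar>real_of_int k\<bar> < 2 * pi * 1"
    by (simp add: k abs_mult)
  then have "k = 0" by simp
  then show "x = y" using k by simp
qed

lemma exists_phase_in_window: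
  fixes n :: real
  assumes "n > 0"
  shows "\<exists>t. t0 - 2 * pi / n < t \<and> t \<le> t0 \<and> cos (n * t) = cos \<phi> \<and> sin (n * t) = sin \<phi>"
proof -
  define k where "k = \<lfloor>(n * t0 - \<phi>) / (2 * pi)\<rfloor>"
  define t where "t = (\<phi> + 2 * pi * k) / n"
  have nt: "n * t = \<phi> + 2 * pi * k"
    using assms by (simp add: t_def)
  have "k \<le> (n * t0 - \<phi>) / (2 * pi)" "(n * t0 - \<phi>) / (2 * pi) < k + 1"
    unfolding k_def by linarith+
  then have "n * t0 - 2 * pi < n * t" "n * t \<le> n * t0"
    unfolding nt by (simp_all add: field_simps)
  then have "t0 - 2 * pi / n < t" "t \<le> t0"
    using assms by (simp_all add: field_simps)
  moreover have "cos (n * t) = cos \<phi> \<and> sin (n * t) = sin \<phi>"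
    using sin_cos_eq_iff nt by metis
  ultimately show ?thesis by blast
qed

lemma modulation_has_zero_near:
  fixes C S :: "real \<Rightarrow> real" and n :: real
  assumes cont: "continuous_on UNIV C" "continuous_on UNIV S"
    and polar: "C t0 = R * cos \<psi>" "S t0 = R * sin \<psi>"
    and close: "\<And>t. \<bar>t - t0\<bar> < \<delta> \<Longrightarrow> \<bar>C t - C t0\<bar> + \<bar>S t - S t0\<bar> < R"
    and n: "n > 0" "2 * pi / n < \<delta>"
  shows "\<exists>t. \<bar>t - t0\<bar> < \<delta> \<and> cos (n * t) * C t + sin (n * t) * S t = 0"
proof -
  define f where "f t = cos (n * t) * C t + sin (n * t) * S t" for t
  have f_near: "\<bar>f t - (cos (n * t) * C t0 + sin (n * t) * S t0)\<bar> < R" if "\<bar>t - t0\<bar> < \<delta>" for t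
  proof -
    have "\<bar>f t - (cos (n * t) * C t0 + sin (n * t) * S t0)\<bar>
        = \<bar>cos (n * t) * (C t - C t0) + sin (n * t) * (S t - S t0)\<bar>"
      by (simp add: f_def algebra_simps)
    also have "\<dots> \<le> \<bar>C t - C t0\<bar> + \<bar>S t - S t0\<bar>"
      using abs_triangle_ineq[of "cos (n * t) * (C t - C t0)" "sin (n * t) * (S t - S t0)"]
        mult_left_le_one_le[OF _ _ abs_cos_le_one, of "\<bar>C t - C t0\<bar>" "n * t"]
        mult_left_le_one_le[OF _ _ abs_sin_le_one, of "\<bar>S t - S t0\<bar>" "n * t"]
      by (simp add: abs_mult)
    also have "\<dots> < R"
      using close that .
    finally show ?thesis .
  qed
  have window: "\<bar>t - t0\<bar> < \<delta>" if "t0 - 2 * pi / n < t" "t \<le> t0" for t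
    using that n by auto
  obtain tp where tp: "t0 - 2 * pi / n < tp" "tp \<le> t0" "cos (n * tp) = cos \<psi>" "sin (n * tp) = sin \<psi>"
    using exists_phase_in_window[OF n(1)] by blast
  obtain tm where tm: "t0 - 2 * pi / n < tm" "tm \<le> t0"
      "cos (n * tm) = - cos \<psi>" "sin (n * tm) = - sin \<psi>"
    using exists_phase_in_window[OF n(1), of t0 "\<psi> + pi"] by auto
  have R: "cos \<psi> * C t0 + sin \<psi> * S t0 = R"
    unfolding polar by (simp add: algebra_simps flip: power2_eq_square distrib_left)
  have "\<bar>f tp - R\<bar> < R"
    using f_near[OF window[OF tp(1,2)]] tp(3,4) R by simp
  moreover have "\<bar>f tm + R\<bar> < R"
    using f_near[OF window[OF tm(1,2)]] tm(3,4) R by (simp add: algebra_simps)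
  ultimately have "f tp > 0" "f tm < 0"
    by linarith+
  then have "0 \<in> closed_segment (f tm) (f tp)"
    by (simp add: closed_segment_eq_real_ivl)
  moreover have "continuous_on (closed_segment tm tp) f"
    using continuous_on_subset[OF cont(1)] continuous_on_subset[OF cont(2)]
    unfolding f_def by (intro continuous_intros) auto
  ultimately obtain t where t: "t \<in> closed_segment tm tp" "f t = 0"
    using IVT'_closed_segment_real by blast
  then have "min tm tp \<le> t" "t \<le> max tm tp"
    by (auto simp: closed_segment_eq_real_ivl split: if_splits)
  then have "\<bar>t - t0\<bar> < \<delta>"
    using window tp(1,2) tm(1,2) by (simp add: min_def max_def split: if_splits)
  with t(2) show ?thesis
    unfolding f_def by blast
qed

lemma eventually_modulation_has_zero_near:
  fixes C S :: "real \<Rightarrow> real"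
  assumes cont: "continuous_on UNIV C" "continuous_on UNIV S"
    and nonzero: "C t0 \<noteq> 0 \<or> S t0 \<noteq> 0" and "\<delta> > 0"
  shows "eventually (\<lambda>n. \<exists>t. \<bar>t - t0\<bar> < \<delta> \<and> cos (real n * t) * C t + sin (real n * t) * S t = 0)
           sequentially"
proof -
  define z where "z = Complex (C t0) (S t0)"
  have "cmod z > 0"
    using nonzero by (simp add: z_def Complex_eq_0)
  have polar: "C t0 = cmod z * cos (Arg z)" "S t0 = cmod z * sin (Arg z)"
    by (metis Re_rcis rcis_cmod_Arg complex.sel(1) z_def,
        metis Im_rcis rcis_cmod_Arg complex.sel(2) z_def)
  define h where "h t = \<bar>C t - C t0\<bar> + \<bar>S t - S t0\<bar>" for t
  have "isCont h t0"
    using cont unfolding h_def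
    by (intro continuous_intros) (simp_all add: continuous_on_eq_continuous_at)
  then obtain d where "d > 0" and d: "\<And>t. dist t t0 < d \<Longrightarrow> dist (h t) (h t0) < cmod z"
    using \<open>cmod z > 0\<close> unfolding continuous_at_eps_delta by blast
  define \<delta>' where "\<delta>' = min \<delta> d"
  have close: "\<bar>C t - C t0\<bar> + \<bar>S t - S t0\<bar> < cmod z" if "\<bar>t - t0\<bar> < \<delta>'" for t
    using d[of t] that by (simp add: h_def \<delta>'_def dist_real_def)
  have "eventually (\<lambda>n. 2 * pi / real n < \<delta>') sequentially"
    using \<open>\<delta> > 0\<close> \<open>d > 0\<close> by (intro order_tendstoD(2)[OF lim_const_over_n]) (simp add: \<delta>'_def)
  then show ?thesis
    using eventually_gt_at_top[of 0]
  proof eventually_elim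
    case (elim n)
    then obtain t where "\<bar>t - t0\<bar> < \<delta>'" "cos (real n * t) * C t + sin (real n * t) * S t = 0"
      using modulation_has_zero_near[OF cont polar, of \<delta>' "real n", OF close] by auto
    then show ?case
      unfolding \<delta>'_def by force
  qed
qed

definition cos_sum :: "(nat \<Rightarrow> real) \<Rightarrow> nat \<Rightarrow> real \<Rightarrow> real" where
  "cos_sum c m t = (\<Sum>i\<le>m. c i * cos (real i * t))"

definition sin_sum :: "(nat \<Rightarrow> real) \<Rightarrow> nat \<Rightarrow> real \<Rightarrow> real" where
  "sin_sum c m t = (\<Sum>i\<le>m. c i * sin (real i * t))"

lemma continuous_on_cos_sum: "continuous_on S (cos_sum c m)"
  unfolding cos_sum_def by (intro continuous_intros)

lemma continuous_on_sin_sum: "continuous_on S (sin_sum c m)"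
  unfolding sin_sum_def by (intro continuous_intros)

lemma sum_cis_power:
  "(\<Sum>i\<le>m. complex_of_real (c i) * cis t ^ i) = Complex (cos_sum c m t) (sin_sum c m t)"
  by (simp add: complex_eq_iff cos_sum_def sin_sum_def
      cos_n_Re_cis_pow_n sin_n_Im_cis_pow_n)

lemma cos_sum_sin_sum_not_both_zero:
  assumes "c 0 \<noteq> 0" "l < u"
  shows "\<exists>t\<in>{l<..<u}. cos_sum c m t \<noteq> 0 \<or> sin_sum c m t \<noteq> 0"
proof (rule ccontr)
  assume none: "\<not> ?thesis"
  define u' where "u' = min u (l + 2 * pi)"
  have "cis ` {l<..<u'} \<subseteq> {z. (\<Sum>i\<le>m. complex_of_real (c i) * z ^ i) = 0}"
    using none by (auto simp: u'_def sum_cis_power Complex_eq_0)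
  moreover have "finite {z. (\<Sum>i\<le>m. complex_of_real (c i) * z ^ i) = 0}"
    using assms(1) by (subst polyfun_finite_roots) auto
  moreover have "infinite (cis ` {l<..<u'})"
    using assms(2) pi_gt_zero inj_on_cis_interval[of u' l]
    by (simp add: u'_def finite_image_iff)
  ultimately show False
    using finite_subset by blast
qed

lemma poly_cheb_T_cos: "poly (cheb_T k) (cos t) = cos (real k * t)"
proof (induction k rule: cheb_T.induct)
  case (3 k)
  have "cos (real (Suc (Suc k)) * t) = 2 * cos t * cos (real (Suc k) * t) - cos (real k * t)"
    using cos_add[of "real (Suc k) * t" t] cos_diff[of "real (Suc k) * t" t]
    by (simp add: algebra_simps)
  with 3 show ?case by simp
qed simp_all

lemma poly_cheb_TA_cos:
  assumes "length A = m + 1" "m \<le> n"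
  shows "poly (cheb_TA n A) (cos t) =
    cos (real n * t) * cos_sum ((!) A) m t + sin (real n * t) * sin_sum ((!) A) m t"
proof -
  have "poly (cheb_TA n A) (cos t) = (\<Sum>i\<le>m. A ! i * cos (real n * t - real i * t))"
    using assms by (simp add: cheb_TA_def poly_sum poly_cheb_T_cos lessThan_Suc_atMost
        left_diff_distrib)
  then show ?thesis
    by (simp add: cos_sum_def sin_sum_def cos_diff sum_distrib_left sum.distrib algebra_simps)
qed

theorem theorem2p5:
  fixes A :: "real list" and m :: nat
  assumes "m \<ge> 1" and "length A = m + 1"
    and "A ! 0 \<noteq> 0" and "A ! m \<noteq> 0"
  shows "\<forall>x \<in> {-1..1}. \<forall>\<epsilon>>0. \<exists>n0. \<forall>n>n0. n \<ge> m \<longrightarrow>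
           (\<exists>\<xi>::real. poly (cheb_TA n A) \<xi> = 0 \<and> \<bar>x - \<xi>\<bar> < \<epsilon>)"
proof (intro ballI allI impI)
  fix x \<epsilon> :: real
  assume x: "x \<in> {-1..1}" and "\<epsilon> > 0"
  define \<theta> where "\<theta> = arccos x"
  obtain t0 where t0: "t0 \<in> {\<theta> - \<epsilon> / 2<..<\<theta> + \<epsilon> / 2}"
    and nonzero: "cos_sum ((!) A) m t0 \<noteq> 0 \<or> sin_sum ((!) A) m t0 \<noteq> 0"
    using cos_sum_sin_sum_not_both_zero[of "(!) A" "\<theta> - \<epsilon> / 2" "\<theta> + \<epsilon> / 2" m] assms(3) \<open>\<epsilon> > 0\<close>
    by auto
  from eventually_modulation_has_zero_near[OF continuous_on_cos_sum continuous_on_sin_sum nonzero,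
      of "\<epsilon> / 2"] \<open>\<epsilon> > 0\<close>
  obtain N where N: "\<And>n. n \<ge> N \<Longrightarrow> \<exists>t. \<bar>t - t0\<bar> < \<epsilon> / 2 \<and>
      cos (real n * t) * cos_sum ((!) A) m t + sin (real n * t) * sin_sum ((!) A) m t = 0"
    by (auto simp: eventually_sequentially)
  show "\<exists>n0. \<forall>n>n0. n \<ge> m \<longrightarrow> (\<exists>\<xi>. poly (cheb_TA n A) \<xi> = 0 \<and> \<bar>x - \<xi>\<bar> < \<epsilon>)"
  proof (intro exI[of _ N] allI impI)
    fix n assume "n > N" "n \<ge> m"
    then obtain t where t: "\<bar>t - t0\<bar> < \<epsilon> / 2"
      "cos (real n * t) * cos_sum ((!) A) m t + sin (real n * t) * sin_sum ((!) A) m t = 0"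
      using N[of n] by auto
    have "poly (cheb_TA n A) (cos t) = 0"
      using t(2) poly_cheb_TA_cos[OF assms(2) \<open>n \<ge> m\<close>] by simp
    moreover have "\<bar>x - cos t\<bar> < \<epsilon>"
    proof -
      have "\<bar>x - cos t\<bar> \<le> \<bar>\<theta> - t\<bar>"
        using abs_cos_diff_le[of \<theta> t] x by (simp add: \<theta>_def)
      also have "\<dots> < \<epsilon>"
        using t(1) t0 unfolding abs_diff_less_iff greaterThanLessThan_iff by linarith
      finally show ?thesis .
    qed
    ultimately show "\<exists>\<xi>. poly (cheb_TA n A) \<xi> = 0 \<and> \<bar>x - \<xi>\<bar> < \<epsilon>"
      by blast
  qed
qed

end
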